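(* Let $n,q_1,\ldots,q_n\in\mathbb{N}$ and let $(\mathfrak{X}_1,\ldots,\mathfrak{X}_n)$ and $(\mathfrak{Y}_1,\ldots,\mathfrak{Y}_n)$ be random vectors supported on $\mathcal{S}_{++}^{q_1}\times\cdots\times\mathcal{S}_{++}^{q_n}$. Then $(\mathfrak{X}_1,\ldots,\mathfrak{X}_n)\preceq_{\mathrm{Lt}}(\mathfrak{Y}_1,\ldots,\mathfrak{Y}_n)$ if and only if \[\mathbb{E}\Big\{\prod_{i=1}^n\phi_i(\mathfrak{X}_i)\Big\}\ge\mathbb{E}\Big\{\prod_{i=1}^n\phi_i(\mathfrak{Y}_i)\Big\}\] for all matrix-variate completely monotone functions $\phi_i:\mathcal{S}_{++}^{q_i}\to[0,\infty)$, $i\in\{1,\ldots,n\}$, whenever the expectations are finite.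
   Context: $\mathcal{S}_+^q$, $\mathcal{S}_{++}^q$ denote the symmetric nonnegative definite and positive definite real $q\times q$ matrices; $\mathrm{etr}(\cdot)=\exp\{\mathrm{tr}(\cdot)\}$. A map $\phi:\mathcal{S}_{++}^q\to[0,\infty)$ is matrix-variate completely monotone if there is a measure $\mu$ on $\mathcal{S}_+^q$ with $\phi(T)=\int_{\mathcal{S}_+^q}\mathrm{etr}(-TX)\,\mu(\mathrm{d}X)$ for all $T\in\mathcal{S}_{++}^q$. For random vectors of matrices $(\mathfrak{X}_1,\ldots,\mathfrak{X}_n)$, $(\mathfrak{Y}_1,\ldots,\mathfrak{Y}_n)$ on $\mathcal{S}_+^{q_1}\times\cdots\times\mathcal{S}_+^{q_n}$, one writes $(\mathfrak{X}_1,\ldots,\mathfrak{X}_n)\preceq_{\mathrm{Lt}}(\mathfrak{Y}_1,\ldots,\mathfrak{Y}_n)$ (matrix-variate Laplace transform order) if $\mathbb{E}\{\prod_{i=1}^n\mathrm{etr}(-T_i\mathfrak{X}_i)\}\ge\mathbb{E}\{\prod_{i=1}^n\mathrm{etr}(-T_i\mathfrak{Y}_i)\}$ for all $T_i\in\mathcal{S}_+^{q_i}$, $i\in\{1,\ldots,n\}$. *)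

theory Defs
  imports "HOL-Probability.Probability"
begin

text \<open>Real q x q matrices are represented as functions nat => nat => real whose
entries outside {..<q} x {..<q} vanish (zero padding).  The type carries the
product topology, hence a Borel sigma-algebra.\<close>

type_synonym rmat = "nat \<Rightarrow> nat \<Rightarrow> real"

definition sym_mats :: "nat \<Rightarrow> rmat set" where
  "sym_mats q = {A. (\<forall>i j. (q \<le> i \<or> q \<le> j) \<longrightarrow> A i j = 0) \<and>
                    (\<forall>i<q. \<forall>j<q. A i j = A j i)}"

definition psd_mats :: "nat \<Rightarrow> rmat set" where
  "psd_mats q = {A \<in> sym_mats q.
      \<forall>x::nat \<Rightarrow> real. (\<Sum>i<q. \<Sum>j<q. x i * A i j * x j) \<ge> 0}"

definition pd_mats :: "nat \<Rightarrow> rmat set" where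
  "pd_mats q = {A \<in> sym_mats q.
      \<forall>x::nat \<Rightarrow> real. (\<exists>i<q. x i \<noteq> 0) \<longrightarrow> (\<Sum>i<q. \<Sum>j<q. x i * A i j * x j) > 0}"

definition mtr_prod :: "nat \<Rightarrow> rmat \<Rightarrow> rmat \<Rightarrow> real" where
  "mtr_prod q A B = (\<Sum>i<q. \<Sum>j<q. A i j * B j i)"

definition etr_neg :: "nat \<Rightarrow> rmat \<Rightarrow> rmat \<Rightarrow> real" where
  "etr_neg q T X = exp (- mtr_prod q T X)"

definition matrix_cm :: "nat \<Rightarrow> (rmat \<Rightarrow> real) \<Rightarrow> bool" where
  "matrix_cm q \<phi> \<longleftrightarrow> (\<forall>T\<in>pd_mats q. \<phi> T \<ge> 0) \<and>
     (\<exists>\<mu> :: rmat measure. sets \<mu> = sets (restrict_space borel (psd_mats q)) \<and>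
        (\<forall>T\<in>pd_mats q. ennreal (\<phi> T) = (\<integral>\<^sup>+ X. ennreal (etr_neg q T X) \<partial>\<mu>)))"

definition lt_order ::
  "nat \<Rightarrow> (nat \<Rightarrow> nat) \<Rightarrow> 'a measure \<Rightarrow> ('a \<Rightarrow> nat \<Rightarrow> rmat)
     \<Rightarrow> 'b measure \<Rightarrow> ('b \<Rightarrow> nat \<Rightarrow> rmat) \<Rightarrow> bool" where
  "lt_order n q M X N Y \<longleftrightarrow>
     (\<forall>T :: nat \<Rightarrow> rmat. (\<forall>i<n. T i \<in> psd_mats (q i)) \<longrightarrow>
        (\<integral>\<^sup>+ \<omega>. ennreal (\<Prod>i<n. etr_neg (q i) (T i) (X \<omega> i)) \<partial>M)
        \<ge> (\<integral>\<^sup>+ \<omega>. ennreal (\<Prod>i<n. etr_neg (q i) (T i) (Y \<omega> i)) \<partial>N))"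

end

theory Submission
  imports Defs
begin

(* For psd T the map S \<mapsto> etr(-TS) is the Laplace transform of the point mass at T, hence
   completely monotone, and it is bounded by 1 on S_+ because tr(TS) \<ge> 0 for psd T and S.
   So the inequalities for completely monotone functions contain the Laplace transform order.
   Conversely, write each \<phi>_i as the Laplace transform of a measure \<mu>_i. By Tonelli,
   E \<Prod> \<phi>_i(X_i) is the integral of E \<Prod> etr(-T_i X_i) over (T_1, ..., T_n) with respect to
   \<mu>_1 \<otimes> ... \<otimes> \<mu>_n, and the Laplace transform order compares these integrands pointwise.
   The product measure exists because each \<mu>_i is \<sigma>-finite: the positive function etr(-X)
   has the finite integral \<phi>_i(I). *)

definition quad_form :: "nat \<Rightarrow> rmat \<Rightarrow> (nat \<Rightarrow> real) \<Rightarrow> real" where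
  "quad_form q A x = (\<Sum>i<q. \<Sum>j<q. x i * A i j * x j)"

lemma psd_mats_iff: "A \<in> psd_mats q \<longleftrightarrow> A \<in> sym_mats q \<and> (\<forall>x. 0 \<le> quad_form q A x)"
  by (simp add: psd_mats_def quad_form_def)

lemma sym_mats_eq_0: "A \<in> sym_mats q \<Longrightarrow> q \<le> i \<or> q \<le> j \<Longrightarrow> A i j = 0"
  by (auto simp: sym_mats_def)

lemma sym_mats_sym: "A \<in> sym_mats q \<Longrightarrow> A i j = A j i"
  unfolding sym_mats_def by (cases "i < q \<and> j < q") auto

lemma quad_form_shift:
  assumes "A \<in> sym_mats q" "k < q"
  shows "quad_form q A (\<lambda>i. x i + (if i = k then c else 0)) =
     quad_form q A x + 2 * c * (\<Sum>i<q. x i * A i k) + c\<^sup>2 * A k k"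
proof -
  define d where "d i = (if i = k then c else 0)" for i
  have delta: "(\<Sum>i<q. d i * f i) = c * f k" for f :: "nat \<Rightarrow> real"
  proof -
    have "d i * f i = (if i = k then c * f k else 0)" for i by (simp add: d_def)
    then show ?thesis using assms(2) by simp
  qed
  have "(x i + d i) * A i j * (x j + d j) =
      x i * A i j * x j + d j * (x i * A i j) + d i * (A j i * x j + d j * A i j)" for i j
    using sym_mats_sym[OF assms(1), of i j] by (simp add: algebra_simps)
  then have "quad_form q A (\<lambda>i. x i + d i) = quad_form q A x
      + (\<Sum>i<q. \<Sum>j<q. d j * (x i * A i j)) + (\<Sum>i<q. d i * (\<Sum>j<q. A j i * x j + d j * A i j))"
    by (simp add: quad_form_def sum.distrib sum_distrib_left distrib_left)
  also have "\<dots> = quad_form q A x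
      + (\<Sum>i<q. c * (x i * A i k)) + c * ((\<Sum>j<q. A j k * x j) + c * A k k)"
    by (simp only: delta sum.distrib)
  also have "\<dots> = quad_form q A x + 2 * c * (\<Sum>i<q. x i * A i k) + c\<^sup>2 * A k k"
    by (simp add: sum_distrib_left algebra_simps power2_eq_square)
  finally show ?thesis by (simp add: d_def)
qed

lemma quad_form_unit:
  assumes "A \<in> sym_mats q" "k < q"
  shows "quad_form q A (\<lambda>i. if i = k then c else 0) = c\<^sup>2 * A k k"
  using quad_form_shift[OF assms, of "\<lambda>_. 0" c] by (simp add: quad_form_def)

lemma psd_diag_nonneg:
  assumes "A \<in> psd_mats q"
  shows "0 \<le> A k k"
proof (cases "k < q")
  case True
  have "quad_form q A (\<lambda>i. if i = k then 1 else 0) = A k k"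
    using assms True by (simp add: quad_form_unit psd_mats_iff)
  then show ?thesis using assms by (metis psd_mats_iff)
next
  case False
  then show ?thesis using assms sym_mats_eq_0[of A q k k] by (simp add: psd_mats_iff)
qed

lemma psd_row_eq_0:
  assumes A: "A \<in> psd_mats q" and "A k k = 0"
  shows "A k j = 0"
proof (rule ccontr)
  assume nz: "A k j \<noteq> 0"
  then have "k < q" "j < q" "j \<noteq> k"
    using A \<open>A k k = 0\<close> sym_mats_eq_0[of A q k j] by (auto simp: psd_mats_iff not_le[symmetric])
  define t where "t = - (A j j + 1) / (2 * A j k)"
  have "A j k \<noteq> 0" using nz A by (simp add: psd_mats_iff sym_mats_sym[of A q j k])
  have "quad_form q A (\<lambda>i. (if i = j then 1 else 0) + (if i = k then t else 0)) =
      quad_form q A (\<lambda>i. if i = j then 1 else 0)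
      + 2 * t * (\<Sum>i<q. (if i = j then 1 else 0) * A i k) + t\<^sup>2 * A k k"
    using A \<open>k < q\<close> by (intro quad_form_shift) (simp_all add: psd_mats_iff)
  also have "\<dots> = A j j + 2 * t * A j k"
    using A \<open>j < q\<close> \<open>A k k = 0\<close>
    by (simp add: quad_form_unit psd_mats_iff if_distrib if_distribR cong: if_cong)
  also have "\<dots> = -1" using \<open>A j k \<noteq> 0\<close> by (simp add: t_def field_simps)
  finally show False using A by (metis psd_mats_iff neg_0_le_iff_le not_one_le_zero)
qed

(* If A k k = 0 the division returns 0, so schur_compl A k = A; for psd A this is harmless
   because row and column k then vanish (psd_row_eq_0). *)
definition schur_compl :: "rmat \<Rightarrow> nat \<Rightarrow> rmat" where
  "schur_compl A k = (\<lambda>i j. A i j - A i k * A k j / A k k)"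

lemma schur_compl_psd:
  assumes A: "A \<in> psd_mats q"
  shows "schur_compl A k \<in> psd_mats q"
proof (cases "A k k = 0")
  case True
  then show ?thesis using A by (simp add: schur_compl_def)
next
  case False
  then have pos: "0 < A k k" and "k < q"
    using A psd_diag_nonneg[OF A, of k] sym_mats_eq_0[of A q k k]
    by (auto simp: psd_mats_iff not_le[symmetric])
  have sym: "A \<in> sym_mats q" using A by (simp add: psd_mats_iff)
  have "schur_compl A k \<in> sym_mats q"
    using sym sym_mats_sym[OF sym] sym_mats_eq_0[OF sym]
    by (auto simp: sym_mats_def schur_compl_def)
  moreover have "0 \<le> quad_form q (schur_compl A k) x" for x
  proof -
    define s where "s = (\<Sum>i<q. x i * A i k)"
    have "(\<Sum>j<q. A k j * x j) = s"
      unfolding s_def using sym_mats_sym[OF sym, of k] by (simp add: mult.commute)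
    then have "(\<Sum>i<q. \<Sum>j<q. (x i * A i k) * (A k j * x j)) = s\<^sup>2"
      by (simp add: sum_product[symmetric] s_def power2_eq_square)
    moreover have "quad_form q (schur_compl A k) x =
        quad_form q A x - (\<Sum>i<q. \<Sum>j<q. (x i * A i k) * (A k j * x j)) / A k k"
      unfolding quad_form_def schur_compl_def
      by (simp add: algebra_simps sum_subtractf sum_divide_distrib)
    ultimately have "quad_form q (schur_compl A k) x = quad_form q A x - s\<^sup>2 / A k k"
      by simp
    also have "\<dots> = quad_form q A (\<lambda>i. x i + (if i = k then - s / A k k else 0))"
      using sym \<open>k < q\<close> pos by (simp add: quad_form_shift s_def field_simps power2_eq_square)
    also have "\<dots> \<ge> 0" using A by (simp add: psd_mats_iff)
    finally show ?thesis .
  qed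
  ultimately show ?thesis by (simp add: psd_mats_iff)
qed

lemma schur_compl_row_col_eq_0:
  assumes "A \<in> psd_mats q"
  shows "schur_compl A k k j = 0" and "schur_compl A k j k = 0"
  using psd_row_eq_0[OF assms, of k j] sym_mats_sym[of A q j k] assms
  by (auto simp: schur_compl_def psd_mats_iff)

lemma mtr_prod_schur_compl:
  assumes "A \<in> sym_mats q"
  shows "mtr_prod q A X = mtr_prod q (schur_compl A k) X + quad_form q X (\<lambda>i. A i k) / A k k"
proof -
  have "mtr_prod q (schur_compl A k) X =
      mtr_prod q A X - (\<Sum>i<q. \<Sum>j<q. A i k * A k j * X j i) / A k k"
    unfolding mtr_prod_def schur_compl_def
    by (simp add: algebra_simps sum_subtractf sum_divide_distrib)
  also have "(\<Sum>i<q. \<Sum>j<q. A i k * A k j * X j i) = quad_form q X (\<lambda>i. A i k)"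
    unfolding quad_form_def using sym_mats_sym[OF assms, of k]
    by (subst sum.swap) (simp add: algebra_simps)
  finally show ?thesis by simp
qed

lemma mtr_prod_psd_nonneg:
  assumes A: "A \<in> psd_mats q" and X: "X \<in> psd_mats q"
  shows "0 \<le> mtr_prod q A X"
proof -
  \<comment> \<open>Induction on the size m of the block supporting A: the Schur complement at m shrinks
      the block and splits off the nonnegative term x' X x / A m m, x the m-th column of A.\<close>
  have "0 \<le> mtr_prod q A X"
    if "A \<in> psd_mats q" "\<And>i j. m \<le> i \<or> m \<le> j \<Longrightarrow> A i j = 0" for m A
    using that
  proof (induction m arbitrary: A)
    case 0
    then show ?case by (simp add: mtr_prod_def)
  next
    case (Suc m)
    have "schur_compl A m i j = 0" if "m \<le> i \<or> m \<le> j" for i j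
      using that Suc.prems schur_compl_row_col_eq_0[OF Suc.prems(1)]
      by (cases "i = m \<or> j = m") (auto simp: schur_compl_def)
    then have "0 \<le> mtr_prod q (schur_compl A m) X"
      using Suc.IH schur_compl_psd[OF Suc.prems(1)] by blast
    moreover have "0 \<le> quad_form q X (\<lambda>i. A i m) / A m m"
      using X psd_diag_nonneg[OF Suc.prems(1)] by (simp add: psd_mats_iff)
    ultimately show ?case
      using Suc.prems(1) by (simp add: mtr_prod_schur_compl[where k = m] psd_mats_iff)
  qed
  then show ?thesis
    using A sym_mats_eq_0[of A q] by (auto simp: psd_mats_iff)
qed

lemma pd_mats_subset_psd_mats: "pd_mats q \<subseteq> psd_mats q"
proof
  fix A assume A: "A \<in> pd_mats q"
  have "0 \<le> (\<Sum>i<q. \<Sum>j<q. x i * A i j * x j)" for x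
    using A by (cases "\<exists>i<q. x i \<noteq> 0") (auto simp: pd_mats_def less_imp_le)
  then show "A \<in> psd_mats q" using A by (simp add: pd_mats_def psd_mats_def)
qed

definition id_mat :: "nat \<Rightarrow> rmat" where
  "id_mat q = (\<lambda>i j. if i = j \<and> i < q then 1 else 0)"

lemma id_mat_pd: "id_mat q \<in> pd_mats q"
proof -
  have "(\<Sum>i<q. \<Sum>j<q. x i * id_mat q i j * x j) = (\<Sum>i<q. (x i)\<^sup>2)" for x
    by (intro sum.cong refl)
      (simp add: id_mat_def if_distrib if_distribR power2_eq_square cong: if_cong)
  moreover have "0 < (\<Sum>i<q. (x i)\<^sup>2)" if "i < q" "x i \<noteq> 0" for x :: "nat \<Rightarrow> real" and i
    using that by (intro sum_pos2[of _ i]) auto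
  moreover have "id_mat q \<in> sym_mats q"
    by (auto simp: sym_mats_def id_mat_def)
  ultimately show ?thesis
    unfolding pd_mats_def by auto
qed

lemma etr_neg_pos: "0 < etr_neg q A B"
  by (simp add: etr_neg_def)

lemma etr_neg_commute: "etr_neg q A B = etr_neg q B A"
  unfolding etr_neg_def mtr_prod_def by (subst sum.swap) (simp add: mult.commute)

lemma etr_neg_psd_le_1: "A \<in> psd_mats q \<Longrightarrow> B \<in> psd_mats q \<Longrightarrow> etr_neg q A B \<le> 1"
  using mtr_prod_psd_nonneg[of A q B] by (simp add: etr_neg_def)

lemma measurable_entry: "(\<lambda>A::rmat. A i j) \<in> borel_measurable borel"
  using measurable_comp[OF measurable_product_coordinates measurable_product_coordinates]
  by (simp add: comp_def)

lemma measurable_restrict_borel: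
  assumes "sets \<mu> = sets (restrict_space borel S)" "f \<in> borel \<rightarrow>\<^sub>M N"
  shows "f \<in> \<mu> \<rightarrow>\<^sub>M N"
  unfolding measurable_cong_sets[OF assms(1) refl] using assms(2) by (rule measurable_restrict_space1)

lemma measurable_PiM_entry:
  fixes \<nu> :: "'i \<Rightarrow> rmat measure"
  assumes "i \<in> I" "sets (\<nu> i) = sets (restrict_space borel S)"
  shows "(\<lambda>t. t i a b) \<in> borel_measurable (PiM I \<nu>)"
  using measurable_compose[OF measurable_component_singleton[OF assms(1), where M = \<nu>]
      measurable_restrict_borel[OF assms(2) measurable_entry]] .

lemma borel_measurable_etr_neg:
  assumes "\<And>a b. (\<lambda>x. f x a b) \<in> borel_measurable K" "\<And>a b. (\<lambda>x. g x a b) \<in> borel_measurable K"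
  shows "(\<lambda>x. etr_neg q (f x) (g x)) \<in> borel_measurable K"
  unfolding etr_neg_def mtr_prod_def using assms by measurable

lemma measurable_etr_neg_restrict:
  assumes "sets \<mu> = sets (restrict_space borel S)"
  shows "(\<lambda>X. etr_neg q X T) \<in> borel_measurable \<mu>"
proof (rule measurable_restrict_borel[OF assms])
  show "(\<lambda>X. etr_neg q X T) \<in> borel_measurable borel"
    by (intro borel_measurable_etr_neg measurable_const measurable_entry) simp
qed

lemma sigma_finite_measure_if_pos_integrable:
  fixes g :: "'a \<Rightarrow> real"
  assumes g[measurable]: "g \<in> borel_measurable M"
    and pos: "\<And>x. x \<in> space M \<Longrightarrow> 0 < g x"
    and fin: "(\<integral>\<^sup>+x. ennreal (g x) \<partial>M) \<noteq> \<infinity>"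
  shows "sigma_finite_measure M"
proof -
  interpret D: finite_measure "density M g"
    using fin by (intro finite_measureI) (simp add: emeasure_density)
  have "ennreal (g x) * ennreal (1 / g x) = 1" if "x \<in> space M" for x
    using pos[OF that] by (simp add: ennreal_mult'[symmetric])
  then have "density (density M g) (\<lambda>x. ennreal (1 / g x)) = density M (\<lambda>_. 1)"
    by (auto simp: density_density_eq intro!: density_cong)
  moreover have "sigma_finite_measure (density (density M g) (\<lambda>x. ennreal (1 / g x)))"
    by (subst D.sigma_finite_iff_density_finite') auto
  ultimately show ?thesis by (simp add: density_1)
qed

definition laplace_transform_of :: "nat \<Rightarrow> rmat measure \<Rightarrow> (rmat \<Rightarrow> real) \<Rightarrow> bool" where
  "laplace_transform_of q \<mu> \<phi> \<longleftrightarrow> sets \<mu> = sets (restrict_space borel (psd_mats q)) \<and>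
     (\<forall>T\<in>pd_mats q. ennreal (\<phi> T) = (\<integral>\<^sup>+X. ennreal (etr_neg q T X) \<partial>\<mu>))"

lemma matrix_cm_iff:
  "matrix_cm q \<phi> \<longleftrightarrow> (\<forall>T\<in>pd_mats q. 0 \<le> \<phi> T) \<and> (\<exists>\<mu>. laplace_transform_of q \<mu> \<phi>)"
  by (simp add: matrix_cm_def laplace_transform_of_def)

lemma laplace_transform_of_space: "laplace_transform_of q \<mu> \<phi> \<Longrightarrow> space \<mu> = psd_mats q"
  unfolding laplace_transform_of_def by (auto dest!: sets_eq_imp_space_eq simp: space_restrict_space)

lemma laplace_transform_of_sigma_finite:
  assumes "laplace_transform_of q \<mu> \<phi>"
  shows "sigma_finite_measure \<mu>"
proof (rule sigma_finite_measure_if_pos_integrable)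
  show "(\<lambda>X. etr_neg q X (id_mat q)) \<in> borel_measurable \<mu>"
    using assms unfolding laplace_transform_of_def by (intro measurable_etr_neg_restrict) simp
  have "(\<integral>\<^sup>+X. ennreal (etr_neg q X (id_mat q)) \<partial>\<mu>) = ennreal (\<phi> (id_mat q))"
    using assms id_mat_pd by (simp add: laplace_transform_of_def etr_neg_commute[of q "id_mat q"])
  then show "(\<integral>\<^sup>+X. ennreal (etr_neg q X (id_mat q)) \<partial>\<mu>) \<noteq> \<infinity>"
    by simp
qed (rule etr_neg_pos)

lemma matrix_cm_product_representation:
  fixes n :: nat
  assumes "\<forall>i<n. matrix_cm (q i) (\<phi> i)"
  obtains \<nu> :: "nat \<Rightarrow> rmat measure" where "product_sigma_finite \<nu>"
    and "\<And>i. i < n \<Longrightarrow> laplace_transform_of (q i) (\<nu> i) (\<phi> i)"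
proof -
  obtain \<mu> where \<mu>: "\<And>i. i < n \<Longrightarrow> laplace_transform_of (q i) (\<mu> i) (\<phi> i)"
    using assms choice[of "\<lambda>i \<mu>. i < n \<longrightarrow> laplace_transform_of (q i) \<mu> (\<phi> i)"]
    by (auto simp: matrix_cm_iff)
  define \<nu> where "\<nu> i = (if i < n then \<mu> i else count_space {})" for i
  show ?thesis
  proof (rule that)
    show "product_sigma_finite \<nu>"
      unfolding product_sigma_finite_def \<nu>_def
      using laplace_transform_of_sigma_finite[OF \<mu>]
        sigma_finite_measure_count_space_finite[of "{} :: rmat set"]
      by simp
    show "laplace_transform_of (q i) (\<nu> i) (\<phi> i)" if "i < n" for i
      using \<mu> that by (simp add: \<nu>_def)
  qed
qed

lemma prod_laplace_transform_eq_nn_integral: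
  fixes \<nu> :: "nat \<Rightarrow> rmat measure"
  assumes "product_sigma_finite \<nu>"
    and \<nu>: "\<And>i. i < n \<Longrightarrow> laplace_transform_of (q i) (\<nu> i) (\<phi> i)"
    and nonneg: "\<And>i. i < n \<Longrightarrow> 0 \<le> \<phi> i (S i)"
    and S: "\<And>i. i < n \<Longrightarrow> S i \<in> pd_mats (q i)"
  shows "ennreal (\<Prod>i<n. \<phi> i (S i)) =
    (\<integral>\<^sup>+t. ennreal (\<Prod>i<n. etr_neg (q i) (t i) (S i)) \<partial>PiM {..<n} \<nu>)"
proof -
  interpret product_sigma_finite \<nu> by fact
  have "ennreal (\<Prod>i<n. \<phi> i (S i)) = (\<Prod>i<n. ennreal (\<phi> i (S i)))"
    by (intro prod_ennreal[symmetric]) (use nonneg in auto)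
  also have "\<dots> = (\<Prod>i<n. \<integral>\<^sup>+A. ennreal (etr_neg (q i) A (S i)) \<partial>\<nu> i)"
    using \<nu> S by (auto simp: laplace_transform_of_def etr_neg_commute intro!: prod.cong)
  also have "\<dots> = (\<integral>\<^sup>+t. (\<Prod>i<n. ennreal (etr_neg (q i) (t i) (S i))) \<partial>PiM {..<n} \<nu>)"
    using \<nu> unfolding laplace_transform_of_def
    by (intro product_nn_integral_prod[symmetric] measurable_compose[OF _ measurable_ennreal]
        measurable_etr_neg_restrict) auto
  also have "\<dots> = (\<integral>\<^sup>+t. ennreal (\<Prod>i<n. etr_neg (q i) (t i) (S i)) \<partial>PiM {..<n} \<nu>)"
    by (simp add: prod_ennreal etr_neg_def)
  finally show ?thesis .
qed

lemma nn_integral_prod_laplace_transform: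
  fixes X :: "'a \<Rightarrow> nat \<Rightarrow> rmat" and \<nu> :: "nat \<Rightarrow> rmat measure"
  assumes "sigma_finite_measure M"
    and X: "\<And>i. i < n \<Longrightarrow> (\<lambda>\<omega>. X \<omega> i) \<in> borel_measurable M"
    and pd: "AE \<omega> in M. \<forall>i<n. X \<omega> i \<in> pd_mats (q i)"
    and "product_sigma_finite \<nu>"
    and \<nu>: "\<And>i. i < n \<Longrightarrow> laplace_transform_of (q i) (\<nu> i) (\<phi> i)"
    and nonneg: "\<And>i T. i < n \<Longrightarrow> T \<in> pd_mats (q i) \<Longrightarrow> 0 \<le> \<phi> i T"
  shows "(\<integral>\<^sup>+\<omega>. ennreal (\<Prod>i<n. \<phi> i (X \<omega> i)) \<partial>M) =
    (\<integral>\<^sup>+t. (\<integral>\<^sup>+\<omega>. ennreal (\<Prod>i<n. etr_neg (q i) (t i) (X \<omega> i)) \<partial>M) \<partial>PiM {..<n} \<nu>)"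
proof -
  interpret product_sigma_finite \<nu> by fact
  interpret pair_sigma_finite M "PiM {..<n} \<nu>"
    unfolding pair_sigma_finite_def using assms(1) sigma_finite[of "{..<n}"] by simp
  have "(\<lambda>p. \<Prod>i<n. etr_neg (q i) (snd p i) (X (fst p) i))
      \<in> borel_measurable (M \<Otimes>\<^sub>M PiM {..<n} \<nu>)"
    using \<nu> X unfolding laplace_transform_of_def
    by (intro borel_measurable_prod borel_measurable_etr_neg measurable_compose[OF measurable_snd]
        measurable_compose[OF measurable_fst] measurable_PiM_entry
        measurable_compose[OF _ measurable_entry]) auto
  then have meas: "(\<lambda>(\<omega>, t). ennreal (\<Prod>i<n. etr_neg (q i) (t i) (X \<omega> i)))
      \<in> borel_measurable (M \<Otimes>\<^sub>M PiM {..<n} \<nu>)"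
    by (simp add: case_prod_beta')
  have "(\<integral>\<^sup>+\<omega>. ennreal (\<Prod>i<n. \<phi> i (X \<omega> i)) \<partial>M) =
      (\<integral>\<^sup>+\<omega>. (\<integral>\<^sup>+t. ennreal (\<Prod>i<n. etr_neg (q i) (t i) (X \<omega> i)) \<partial>PiM {..<n} \<nu>) \<partial>M)"
    using pd by (intro nn_integral_cong_AE)
      (auto elim!: eventually_mono intro!: prod_laplace_transform_eq_nn_integral assms(4) \<nu> nonneg)
  also have "\<dots> = (\<integral>\<^sup>+t. (\<integral>\<^sup>+\<omega>. ennreal (\<Prod>i<n. etr_neg (q i) (t i) (X \<omega> i)) \<partial>M) \<partial>PiM {..<n} \<nu>)"
    using Fubini'[OF meas] by simp
  finally show ?thesis .
qed

lemma matrix_cm_etr_neg: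
  assumes "T \<in> psd_mats q"
  shows "matrix_cm q (etr_neg q T)"
  unfolding matrix_cm_iff laplace_transform_of_def
proof (intro conjI exI ballI)
  let ?\<delta> = "return (restrict_space borel (psd_mats q)) T"
  show "sets ?\<delta> = sets (restrict_space borel (psd_mats q))" by simp
  fix S
  show "0 \<le> etr_neg q T S" using etr_neg_pos[of q T S] by simp
  have "(\<lambda>X. ennreal (etr_neg q S X)) \<in> borel_measurable (restrict_space borel (psd_mats q))"
    unfolding etr_neg_commute[of q S]
    by (intro measurable_compose[OF _ measurable_ennreal] measurable_etr_neg_restrict) simp
  then show "ennreal (etr_neg q T S) = (\<integral>\<^sup>+X. ennreal (etr_neg q S X) \<partial>?\<delta>)"
    using assms by (simp add: nn_integral_return space_restrict_space etr_neg_commute)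
qed

lemma nn_integral_prod_etr_neg_le_1:
  assumes "prob_space K"
    and T: "\<And>i. i < n \<Longrightarrow> T i \<in> psd_mats (q i)"
    and Z: "AE \<omega> in K. \<forall>i<n. Z \<omega> i \<in> psd_mats (q i)"
  shows "(\<integral>\<^sup>+\<omega>. ennreal (\<Prod>i<n. etr_neg (q i) (T i) (Z \<omega> i)) \<partial>K) \<le> 1"
proof -
  have "(\<integral>\<^sup>+\<omega>. ennreal (\<Prod>i<n. etr_neg (q i) (T i) (Z \<omega> i)) \<partial>K) \<le> (\<integral>\<^sup>+\<omega>. 1 \<partial>K)"
    using Z
  proof (intro nn_integral_mono_AE, eventually_elim)
    case (elim \<omega>)
    then have "(\<Prod>i<n. etr_neg (q i) (T i) (Z \<omega> i)) \<le> 1"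
      using T by (intro prod_le_1) (auto simp: etr_neg_psd_le_1 etr_neg_pos less_imp_le)
    then show ?case by (simp add: ennreal_le_1)
  qed
  then show ?thesis
    using prob_space.emeasure_space_1[OF assms(1)] by simp
qed

lemma lt_order_imp_nn_integral_matrix_cm_le:
  fixes X :: "'a \<Rightarrow> nat \<Rightarrow> rmat" and Y :: "'b \<Rightarrow> nat \<Rightarrow> rmat"
  assumes "prob_space M" "prob_space N"
    and "\<And>i. i < n \<Longrightarrow> (\<lambda>\<omega>. X \<omega> i) \<in> borel_measurable M"
    and "\<And>i. i < n \<Longrightarrow> (\<lambda>\<omega>. Y \<omega> i) \<in> borel_measurable N"
    and "AE \<omega> in M. \<forall>i<n. X \<omega> i \<in> pd_mats (q i)"
    and "AE \<omega> in N. \<forall>i<n. Y \<omega> i \<in> pd_mats (q i)"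
    and lt: "lt_order n q M X N Y"
    and cm: "\<forall>i<n. matrix_cm (q i) (\<phi> i)"
  shows "(\<integral>\<^sup>+\<omega>. ennreal (\<Prod>i<n. \<phi> i (Y \<omega> i)) \<partial>N)
    \<le> (\<integral>\<^sup>+\<omega>. ennreal (\<Prod>i<n. \<phi> i (X \<omega> i)) \<partial>M)"
proof -
  obtain \<nu> where \<nu>: "product_sigma_finite \<nu>"
    "\<And>i. i < n \<Longrightarrow> laplace_transform_of (q i) (\<nu> i) (\<phi> i)"
    using matrix_cm_product_representation[OF cm] by blast
  have nonneg: "\<And>i T. i < n \<Longrightarrow> T \<in> pd_mats (q i) \<Longrightarrow> 0 \<le> \<phi> i T"
    using cm by (simp add: matrix_cm_iff)
  have psd: "t i \<in> psd_mats (q i)" if "t \<in> space (PiM {..<n} \<nu>)" "i < n" for t i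
    using that laplace_transform_of_space[OF \<nu>(2)] by (auto simp: space_PiM)
  have "(\<integral>\<^sup>+\<omega>. ennreal (\<Prod>i<n. \<phi> i (Y \<omega> i)) \<partial>N) =
      (\<integral>\<^sup>+t. (\<integral>\<^sup>+\<omega>. ennreal (\<Prod>i<n. etr_neg (q i) (t i) (Y \<omega> i)) \<partial>N) \<partial>PiM {..<n} \<nu>)"
    using assms(2,4,6) \<nu> nonneg prob_space_imp_sigma_finite
    by (intro nn_integral_prod_laplace_transform) auto
  also have "\<dots> \<le> (\<integral>\<^sup>+t. (\<integral>\<^sup>+\<omega>. ennreal (\<Prod>i<n. etr_neg (q i) (t i) (X \<omega> i)) \<partial>M) \<partial>PiM {..<n} \<nu>)"
    using lt psd unfolding lt_order_def by (intro nn_integral_mono) auto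
  also have "\<dots> = (\<integral>\<^sup>+\<omega>. ennreal (\<Prod>i<n. \<phi> i (X \<omega> i)) \<partial>M)"
    using assms(1,3,5) \<nu> nonneg prob_space_imp_sigma_finite
    by (intro nn_integral_prod_laplace_transform[symmetric]) auto
  finally show ?thesis .
qed

lemma lt_order_if_nn_integral_matrix_cm_le:
  fixes X :: "'a \<Rightarrow> nat \<Rightarrow> rmat" and Y :: "'b \<Rightarrow> nat \<Rightarrow> rmat"
  assumes "prob_space M" "prob_space N"
    and "AE \<omega> in M. \<forall>i<n. X \<omega> i \<in> pd_mats (q i)"
    and "AE \<omega> in N. \<forall>i<n. Y \<omega> i \<in> pd_mats (q i)"
    and cm_le: "\<And>\<phi>. \<forall>i<n. matrix_cm (q i) (\<phi> i) \<Longrightarrow>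
      (\<integral>\<^sup>+\<omega>. ennreal (\<Prod>i<n. \<phi> i (X \<omega> i)) \<partial>M) \<noteq> \<infinity> \<Longrightarrow>
      (\<integral>\<^sup>+\<omega>. ennreal (\<Prod>i<n. \<phi> i (Y \<omega> i)) \<partial>N) \<noteq> \<infinity> \<Longrightarrow>
      (\<integral>\<^sup>+\<omega>. ennreal (\<Prod>i<n. \<phi> i (Y \<omega> i)) \<partial>N)
        \<le> (\<integral>\<^sup>+\<omega>. ennreal (\<Prod>i<n. \<phi> i (X \<omega> i)) \<partial>M)"
  shows "lt_order n q M X N Y"
  unfolding lt_order_def
proof (intro allI impI)
  fix T :: "nat \<Rightarrow> rmat"
  assume T: "\<forall>i<n. T i \<in> psd_mats (q i)"
  have finite: "(\<integral>\<^sup>+\<omega>. ennreal (\<Prod>i<n. etr_neg (q i) (T i) (Z \<omega> i)) \<partial>K) \<noteq> \<infinity>"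
    if "prob_space K" "AE \<omega> in K. \<forall>i<n. Z \<omega> i \<in> pd_mats (q i)" for K :: "'c measure" and Z
  proof -
    have "AE \<omega> in K. \<forall>i<n. Z \<omega> i \<in> psd_mats (q i)"
      using that(2) pd_mats_subset_psd_mats by (auto elim!: eventually_mono)
    then show ?thesis
      using nn_integral_prod_etr_neg_le_1[OF that(1), of n T q Z] T by (auto simp: top_unique)
  qed
  show "(\<integral>\<^sup>+\<omega>. ennreal (\<Prod>i<n. etr_neg (q i) (T i) (Y \<omega> i)) \<partial>N)
      \<le> (\<integral>\<^sup>+\<omega>. ennreal (\<Prod>i<n. etr_neg (q i) (T i) (X \<omega> i)) \<partial>M)"
  proof (rule cm_le[of "\<lambda>i. etr_neg (q i) (T i)"])
    show "\<forall>i<n. matrix_cm (q i) (etr_neg (q i) (T i))"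
      using T matrix_cm_etr_neg by blast
  qed (use finite assms in auto)
qed

theorem proposition3p1:
  fixes n :: nat and q :: "nat \<Rightarrow> nat"
    and M :: "'a measure" and X :: "'a \<Rightarrow> nat \<Rightarrow> rmat"
    and N :: "'b measure" and Y :: "'b \<Rightarrow> nat \<Rightarrow> rmat"
  assumes "n \<ge> 1" and "\<forall>i<n. q i \<ge> 1"
    and "prob_space M" and "prob_space N"
    and "\<forall>i<n. (\<lambda>\<omega>. X \<omega> i) \<in> borel_measurable M"
    and "\<forall>i<n. (\<lambda>\<omega>. Y \<omega> i) \<in> borel_measurable N"
    and "AE \<omega> in M. \<forall>i<n. X \<omega> i \<in> pd_mats (q i)"
    and "AE \<omega> in N. \<forall>i<n. Y \<omega> i \<in> pd_mats (q i)"
  shows "lt_order n q M X N Y \<longleftrightarrow>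
    (\<forall>\<phi> :: nat \<Rightarrow> rmat \<Rightarrow> real. (\<forall>i<n. matrix_cm (q i) (\<phi> i)) \<longrightarrow>
       (\<integral>\<^sup>+ \<omega>. ennreal (\<Prod>i<n. \<phi> i (X \<omega> i)) \<partial>M) \<noteq> \<infinity> \<longrightarrow>
       (\<integral>\<^sup>+ \<omega>. ennreal (\<Prod>i<n. \<phi> i (Y \<omega> i)) \<partial>N) \<noteq> \<infinity> \<longrightarrow>
       (\<integral>\<^sup>+ \<omega>. ennreal (\<Prod>i<n. \<phi> i (X \<omega> i)) \<partial>M)
         \<ge> (\<integral>\<^sup>+ \<omega>. ennreal (\<Prod>i<n. \<phi> i (Y \<omega> i)) \<partial>N))"
  using lt_order_imp_nn_integral_matrix_cm_le[OF assms(3,4)]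
    lt_order_if_nn_integral_matrix_cm_le[OF assms(3,4,7,8)] assms(5-8)
  by (intro iffI allI impI) blast+

end
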